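(* For $n\ge1$ let $c(n)$ be the number of nonempty words $\omega$ such that $\omega\omega\omega$ is a suffix of $\mathbb{T}[1,n]$ and $\omega\omega\omega$ is not a factor of $\mathbb{T}[1,n-1]$. Then $c(n)=0$ for $n\leq57$; for $n\geq58$, let $m$ be such that $t_{m-1}+2t_{m-4}\leq n<t_{m}+2t_{m-3}$; then $m\geq7$ and $c(n)=1$ if and only if $n\leq t_{m-1}+k_{m+1}-2$.
   Context: The Tribonacci sequence $\mathbb{T}=x_1x_2x_3\cdots$ is the fixed point (infinite word starting with $a$) of the substitution $\sigma(a)=ab$, $\sigma(b)=ac$, $\sigma(c)=a$ over $\{a,b,c\}$. For $n\ge1$, $\mathbb{T}[1,n]=x_1\cdots x_n$ is its prefix of length $n$. The Tribonacci numbers are $t_m=|\sigma^m(a)|$ for $m\ge0$, with $t_{-2}=0$, $t_{-1}=1$; thus $t_0=1,t_1=2,t_2=4$ and $t_m=t_{m-1}+t_{m-2}+t_{m-3}$. The kernel numbers are $k_0=0$, $k_1=k_2=1$, $k_m=k_{m-1}+k_{m-2}+k_{m-3}-1$ for $m\ge3$. *)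

theory Defs
  imports Main "HOL-Library.Sublist"
begin

datatype letter = A | B | C

fun sigma_letter :: "letter \<Rightarrow> letter list" where
  "sigma_letter A = [A, B]"
| "sigma_letter B = [A, C]"
| "sigma_letter C = [A]"

definition sigma :: "letter list \<Rightarrow> letter list" where
  "sigma w = concat (map sigma_letter w)"

text \<open>The i-th letter (1-indexed) of the Tribonacci word: the i-th letter of sigma^i(a),
  which has length t_i > i and is a prefix of the fixed point.\<close>
definition trib_letter :: "nat \<Rightarrow> letter" where
  "trib_letter i = (sigma ^^ i) [A] ! (i - 1)"

definition trib_prefix :: "nat \<Rightarrow> letter list" where
  "trib_prefix n = map trib_letter [1..<n+1]"

definition tnum :: "int \<Rightarrow> int" where
  "tnum m = (if m = -2 then 0 else if m = -1 then 1
             else int (length ((sigma ^^ nat m) [A])))"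

fun knum :: "nat \<Rightarrow> int" where
  "knum 0 = 0"
| "knum (Suc 0) = 1"
| "knum (Suc (Suc 0)) = 1"
| "knum (Suc (Suc (Suc m))) = knum (Suc (Suc m)) + knum (Suc m) + knum m - 1"

definition cube_count :: "nat \<Rightarrow> nat" where
  "cube_count n = card {w. w \<noteq> [] \<and> suffix (w @ w @ w) (trib_prefix n)
                          \<and> \<not> sublist (w @ w @ w) (trib_prefix (n - 1))}"

end

theory Submission
  imports Defs
begin

text \<open>
  Every \<open>a\<close> of the Tribonacci word starts the image \<open>\<sigma>(x\<^sub>k)\<close> of a letter, and the letter
  after that image determines \<open>x\<^sub>k\<close>. Hence a left-maximal factor with period \<open>p \<ge> 2\<close> starts
  with \<open>a\<close> and is the image of a left-maximal factor with a smaller period, extended by at most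
  one letter. By induction on the period, a left-maximal factor of length at least \<open>3p - 1\<close>
  with period \<open>p\<close> lies at the start of an occurrence of one of the words \<open>W\<^sub>0 = aa\<close>,
  \<open>W\<^sub>j\<^sub>+\<^sub>1 = \<sigma>(W\<^sub>j) a\<close>, placed at the iterated image of a \<open>c\<close>; \<open>W\<^sub>j\<close> has period \<open>t\<^sub>j\<close> and
  length \<open>t\<^sub>j + k\<^sub>j\<^sub>+\<^sub>5 - 2 < 4 t\<^sub>j\<close>. So there are no fourth powers, every cube has period \<open>t\<^sub>j\<close>
  with \<open>j \<ge> 3\<close>, and every cube occurs inside the first occurrence of \<open>W\<^sub>j\<close>, which starts at
  \<open>t\<^sub>j\<^sub>+\<^sub>3 - t\<^sub>j\<close> because the first \<open>c\<close> is \<open>x\<^sub>4\<close>. Within that occurrence distinct offsets give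
  distinct cubes, so a new cube of period \<open>t\<^sub>j\<close> ends at \<open>n\<close> exactly when
  \<open>t\<^sub>j\<^sub>+\<^sub>3 + 2 t\<^sub>j \<le> n \<le> t\<^sub>j\<^sub>+\<^sub>3 + k\<^sub>j\<^sub>+\<^sub>5 - 2\<close>. These windows are disjoint, which gives the
  theorem with \<open>m = j + 4\<close>.
\<close>

abbreviation trib_block :: "nat \<Rightarrow> letter list" where
  "trib_block n \<equiv> (sigma ^^ n) [A]"

lemma sigma_Nil [simp]: "sigma [] = []"
  by (simp add: sigma_def)

lemma sigma_Cons [simp]: "sigma (a # u) = sigma_letter a @ sigma u"
  by (simp add: sigma_def)

lemma sigma_append [simp]: "sigma (u @ v) = sigma u @ sigma v"
  by (simp add: sigma_def)

lemma length_sigma_letter [simp]: "length (sigma_letter a) = (if a = C then 1 else 2)"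
  by (cases a) auto

lemma length_le_length_sigma: "length u \<le> length (sigma u)"
  by (induction u) auto

lemma funpow_sigma_append: "(sigma ^^ n) (u @ v) = (sigma ^^ n) u @ (sigma ^^ n) v"
  by (induction n) auto

lemma funpow_sigma_Suc: "(sigma ^^ Suc n) [a] = (sigma ^^ n) (sigma_letter a)"
  by (simp add: funpow_Suc_right sigma_def del: funpow.simps)

lemma trib_block_Suc: "trib_block (Suc n) = trib_block n @ (sigma ^^ n) [B]"
  using funpow_sigma_append[of n "[A]" "[B]"] by (simp add: funpow_sigma_Suc del: funpow.simps)

lemma funpow_sigma_B_Suc: "(sigma ^^ Suc n) [B] = trib_block n @ (sigma ^^ n) [C]"
  using funpow_sigma_append[of n "[A]" "[C]"] by (simp add: funpow_sigma_Suc del: funpow.simps)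

lemma funpow_sigma_C_Suc: "(sigma ^^ Suc n) [C] = trib_block n"
  by (simp add: funpow_sigma_Suc del: funpow.simps)

lemma prefix_trib_block_mono: "n \<le> m \<Longrightarrow> prefix (trib_block n) (trib_block m)"
proof (induction m rule: dec_induct)
  case (step m)
  then show ?case using trib_block_Suc[of m] prefix_order.trans by (metis prefixI)
qed simp

definition trib_len :: "nat \<Rightarrow> nat" where
  "trib_len n = length (trib_block n)"

lemma trib_len_Suc: "trib_len (Suc n) = trib_len n + length ((sigma ^^ n) [B])"
  by (simp add: trib_len_def trib_block_Suc del: funpow.simps)

lemma trib_len_less_Suc: "trib_len n < trib_len (Suc n)"
proof -
  have "length [B] \<le> length ((sigma ^^ n) [B])"
    by (induction n) (auto intro: order_trans length_le_length_sigma)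
  then show ?thesis by (simp add: trib_len_Suc Suc_le_eq del: funpow.simps)
qed

lemma strict_mono_trib_len: "strict_mono trib_len"
  by (simp add: strict_mono_Suc_iff trib_len_less_Suc)

lemma trib_len_gt: "n < trib_len n"
proof (induction n)
  case 0 then show ?case by (simp add: trib_len_def)
next
  case (Suc n) then show ?case using trib_len_less_Suc[of n] by simp
qed

definition trib :: "nat \<Rightarrow> letter" where
  "trib i = trib_letter (Suc i)"

lemma nth_trib_block: assumes "i < trib_len m" shows "trib_block m ! i = trib i"
proof -
  let ?N = "max m (Suc i)"
  have "i < length (trib_block (Suc i))" using trib_len_gt[of "Suc i"] by (simp add: trib_len_def)
  then have "trib_block (Suc i) ! i = trib_block ?N ! i"
    using prefix_trib_block_mono[of "Suc i" ?N] by (metis max.cobounded2 prefix_def nth_append)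
  moreover have "trib_block m ! i = trib_block ?N ! i"
    using prefix_trib_block_mono[of m ?N] assms by (metis max.cobounded1 prefix_def nth_append trib_len_def)
  ultimately show ?thesis by (simp add: trib_def trib_letter_def)
qed

definition factor :: "nat \<Rightarrow> nat \<Rightarrow> letter list" where
  "factor i l = map trib [i..<i + l]"

lemma length_factor [simp]: "length (factor i l) = l"
  by (simp add: factor_def)

lemma nth_factor [simp]: "k < l \<Longrightarrow> factor i l ! k = trib (i + k)"
  by (simp add: factor_def)

lemma factor_add: "factor i (a + b) = factor i a @ factor (i + a) b"
  using upt_add_eq_append[of i "i + a" b] by (simp add: factor_def add.assoc)

lemma trib_prefix_eq_factor: "trib_prefix n = factor 0 n"
  by (simp add: trib_prefix_def factor_def trib_def map_Suc_upt[symmetric] del: upt_Suc)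

lemma take_trib_block: "n \<le> trib_len m \<Longrightarrow> take n (trib_block m) = factor 0 n"
  by (rule nth_equalityI) (auto simp: nth_trib_block trib_len_def)

lemma factor_0_trib_len: "factor 0 (trib_len m) = trib_block m"
  using take_trib_block[of "trib_len m" m] by (simp add: trib_len_def)

subsection \<open>Positions of images of letters\<close>

text \<open>Since \<open>\<sigma>\<close> fixes the Tribonacci word, the word is the concatenation of the
  images \<open>\<sigma>(x\<^sub>k)\<close>; the image of the letter at position \<open>k\<close> starts at \<open>sigma_pos k\<close>.\<close>

definition sigma_pos :: "nat \<Rightarrow> nat" where
  "sigma_pos k = length (sigma (factor 0 k))"

lemma factor_0_sigma_pos: "factor 0 (sigma_pos k) = sigma (factor 0 k)"
proof -
  have "prefix (factor 0 k) (trib_block k)"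
    using take_trib_block[of k k] trib_len_gt[of k] by (metis less_imp_le take_is_prefix)
  then have pre: "prefix (sigma (factor 0 k)) (trib_block (Suc k))"
    by (auto simp: prefix_def)
  then have "sigma_pos k \<le> trib_len (Suc k)"
    by (simp add: sigma_pos_def trib_len_def prefix_length_le)
  then have "factor 0 (sigma_pos k) = take (sigma_pos k) (trib_block (Suc k))"
    by (rule take_trib_block[symmetric])
  also have "\<dots> = sigma (factor 0 k)"
    using pre by (auto simp: sigma_pos_def prefix_def)
  finally show ?thesis .
qed

lemma sigma_pos_add: "sigma_pos (u + n) = sigma_pos u + length (sigma (factor u n))"
  by (simp add: sigma_pos_def factor_add)

lemma factor_sigma_pos: "factor (sigma_pos u) (length (sigma (factor u n))) = sigma (factor u n)"
  using factor_0_sigma_pos[of "u + n"] factor_0_sigma_pos[of u]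
  by (simp add: sigma_pos_add factor_add)

lemma sigma_pos_Suc: "sigma_pos (Suc k) = sigma_pos k + length (sigma_letter (trib k))"
  using sigma_pos_add[of k 1] by (simp add: factor_def)

lemma trib_sigma_pos_add:
  assumes "r < length (sigma_letter (trib k))"
  shows "trib (sigma_pos k + r) = sigma_letter (trib k) ! r"
  using factor_sigma_pos[of k 1] nth_factor[OF assms, of "sigma_pos k"] by (simp add: factor_def)

fun succ_letter :: "letter \<Rightarrow> letter" where
  "succ_letter A = B"
| "succ_letter B = C"
| "succ_letter C = A"

lemma succ_letter_eq_iff [simp]: "succ_letter a = succ_letter b \<longleftrightarrow> a = b"
  by (cases a; cases b) auto

lemma trib_sigma_pos [simp]: "trib (sigma_pos k) = A"
  using trib_sigma_pos_add[of 0 k] by (cases "trib k") auto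

lemma sigma_pos_0 [simp]: "sigma_pos 0 = 0"
  by (simp add: sigma_pos_def factor_def)

lemma sigma_pos_less_Suc: "sigma_pos k < sigma_pos (Suc k)"
  by (simp add: sigma_pos_Suc)

lemma strict_mono_sigma_pos: "strict_mono sigma_pos"
  by (simp add: strict_mono_Suc_iff sigma_pos_less_Suc)

lemma sigma_pos_less_iff [simp]: "sigma_pos a < sigma_pos b \<longleftrightarrow> a < b"
  using strict_mono_sigma_pos strict_mono_less by blast

lemma sigma_pos_le_iff [simp]: "sigma_pos a \<le> sigma_pos b \<longleftrightarrow> a \<le> b"
  using strict_mono_sigma_pos strict_mono_less_eq by blast

lemma sigma_pos_eq_iff [simp]: "sigma_pos a = sigma_pos b \<longleftrightarrow> a = b"
  using strict_mono_sigma_pos strict_mono_eq by blast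

lemma sigma_pos_add_ge: "sigma_pos k + m \<le> sigma_pos (k + m)"
proof (induction m)
  case (Suc m) then show ?case using sigma_pos_less_Suc[of "k + m"] by (simp only: add_Suc_right)
qed simp

lemma trib_Suc_sigma_pos: "trib (Suc (sigma_pos k)) = succ_letter (trib k)"
proof (cases "trib k = C")
  case True
  then have "Suc (sigma_pos k) = sigma_pos (Suc k)" by (simp add: sigma_pos_Suc)
  then show ?thesis using True by simp
next
  case False
  then show ?thesis using trib_sigma_pos_add[of 1 k] by (cases "trib k") auto
qed

lemma trib_sigma_pos_Suc_minus_1: "trib (sigma_pos (Suc k) - 1) = succ_letter (trib k)"
  using trib_Suc_sigma_pos[of k] by (cases "trib k = C") (auto simp: sigma_pos_Suc)

lemma sigma_pos_cover: "\<exists>k. sigma_pos k \<le> y \<and> y < sigma_pos (Suc k)"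
proof (induction y)
  case 0 then show ?case using sigma_pos_less_Suc[of 0] by (intro exI[of _ 0]) simp
next
  case (Suc y)
  then obtain k where "sigma_pos k \<le> y" "y < sigma_pos (Suc k)" by blast
  then show ?case using sigma_pos_less_Suc[of "Suc k"]
    by (cases "Suc y = sigma_pos (Suc k)") (auto intro: le_SucI)
qed

lemma sigma_pos_cases:
  obtains k where "y = sigma_pos k"
  | k where "y = Suc (sigma_pos k)" "trib k \<noteq> C" "sigma_pos (Suc k) = Suc y"
proof -
  obtain k where "sigma_pos k \<le> y" "y < sigma_pos (Suc k)" using sigma_pos_cover by blast
  then consider "y = sigma_pos k"
    | "y = Suc (sigma_pos k)" "trib k \<noteq> C" "sigma_pos (Suc k) = Suc y"
    by (cases "trib k = C"; cases "y = sigma_pos k") (auto simp: sigma_pos_Suc)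
  then show ?thesis using that by blast
qed

lemma trib_eq_A_iff: "trib y = A \<longleftrightarrow> (\<exists>k. y = sigma_pos k)"
proof
  assume "trib y = A"
  then show "\<exists>k. y = sigma_pos k"
    by (cases y rule: sigma_pos_cases) (auto simp: trib_Suc_sigma_pos elim: succ_letter.elims)
qed auto

lemma trib_neq_A_between_A:
  assumes "trib y \<noteq> A"
  shows "0 < y \<and> trib (y - 1) = A \<and> trib (Suc y) = A"
proof (cases y rule: sigma_pos_cases)
  case (1 k) with assms show ?thesis by simp
next
  case (2 k) then show ?thesis using trib_sigma_pos[of k] trib_sigma_pos[of "Suc k"] by simp
qed

lemma trib_Suc_eq_A_if_C: "trib k = C \<Longrightarrow> trib (Suc k) = A"
  using trib_neq_A_between_A[of k] by simp

lemma sigma_pos_add_2: "sigma_pos k + 3 \<le> sigma_pos (k + 2)"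
  using sigma_pos_Suc[of k] sigma_pos_Suc[of "Suc k"] trib_Suc_eq_A_if_C[of k]
  by (auto simp: numeral_2_eq_2)

lemma sigma_pos_gap: "2 \<le> m \<Longrightarrow> sigma_pos k + m + 1 \<le> sigma_pos (k + m)"
proof (induction m rule: dec_induct)
  case base then show ?case using sigma_pos_add_2[of k] by simp
next
  case (step m)
  then show ?case using sigma_pos_less_Suc[of "k + m"] by (simp del: sigma_pos_less_iff)
qed

lemma AA_at_image_of_C:
  assumes "trib y = A" "trib (Suc y) = A"
  obtains q where "y = sigma_pos q" "trib q = C"
proof -
  obtain q q' where q: "y = sigma_pos q" and q': "Suc y = sigma_pos q'"
    using assms trib_eq_A_iff by metis
  then have "q < q'" using sigma_pos_less_iff by (metis lessI)
  then have "sigma_pos (Suc q) \<le> sigma_pos q'" by simp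
  then have "sigma_pos (Suc q) = Suc (sigma_pos q)"
    using q q' sigma_pos_less_Suc[of q] by linarith
  then have "trib q = C" by (simp add: sigma_pos_Suc split: if_splits)
  with q that show ?thesis by blast
qed

lemma no_AAA:
  assumes "trib y = A" "trib (Suc y) = A" shows "trib (Suc (Suc y)) \<noteq> A"
proof -
  obtain q where q: "y = sigma_pos q" "trib q = C" using AA_at_image_of_C[OF assms] .
  then have "Suc y = sigma_pos (Suc q)" by (simp add: sigma_pos_Suc)
  then show ?thesis
    using trib_Suc_sigma_pos[of "Suc q"] trib_Suc_eq_A_if_C[OF q(2)] by simp
qed

subsection \<open>Periodic factors\<close>

text \<open>\<open>periodic i p d\<close>: the factor of length \<open>d + p\<close> starting at \<open>i\<close> has period \<open>p\<close>.\<close>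

definition periodic :: "nat \<Rightarrow> nat \<Rightarrow> nat \<Rightarrow> bool" where
  "periodic i p d \<longleftrightarrow> (\<forall>y<d. trib (i + y) = trib (i + y + p))"

definition left_maximal :: "nat \<Rightarrow> nat \<Rightarrow> bool" where
  "left_maximal i p \<longleftrightarrow> i = 0 \<or> trib (i - 1) \<noteq> trib (i - 1 + p)"

lemma periodic_iff_factor: "periodic i p d \<longleftrightarrow> factor i d = factor (i + p) d"
  by (auto simp: periodic_def list_eq_iff_nth_eq ac_simps)

lemma periodic_add: "periodic i p (a + b) \<longleftrightarrow> periodic i p a \<and> periodic (i + a) p b"
  by (simp add: periodic_iff_factor factor_add ac_simps)

lemma periodic_mono: "periodic i p d \<Longrightarrow> d' \<le> d \<Longrightarrow> periodic i p d'"
  by (metis le_add_diff_inverse periodic_add)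

lemma sigma_pos_periodic:
  "periodic u p v \<Longrightarrow> sigma_pos (u + p + v) + sigma_pos u = sigma_pos (u + p) + sigma_pos (u + v)"
  by (simp add: periodic_iff_factor sigma_pos_add)

lemma periodic_sigma:
  assumes "periodic u p d"
  shows "periodic (sigma_pos u) (sigma_pos (u + p) - sigma_pos u) (sigma_pos (u + d) - sigma_pos u + 1)"
proof -
  let ?P = "sigma_pos (u + p) - sigma_pos u" and ?w = "sigma (factor u d)"
  have P: "sigma_pos (u + p) = sigma_pos u + ?P" by simp
  have L: "sigma_pos (u + d) = sigma_pos u + length ?w" by (rule sigma_pos_add)
  have "periodic (sigma_pos u) ?P (length ?w)"
    using factor_sigma_pos[of u d] factor_sigma_pos[of "u + p" d] assms P
    by (simp add: periodic_iff_factor)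
  moreover have "periodic (sigma_pos u + length ?w) ?P 1"
  proof -
    have "sigma_pos u + length ?w = sigma_pos (u + d)" using L by simp
    moreover have "sigma_pos u + length ?w + ?P = sigma_pos (u + p + d)"
      using sigma_pos_periodic[OF assms] L P by linarith
    ultimately show ?thesis by (simp add: periodic_def)
  qed
  ultimately have "periodic (sigma_pos u) ?P (length ?w + 1)"
    by (simp only: periodic_add)
  then show ?thesis using L by simp
qed

lemma periodic_first: "periodic i p d \<Longrightarrow> 0 < d \<Longrightarrow> trib i = trib (i + p)"
  unfolding periodic_def by (metis add_0_right)

lemma left_maximal_periodic_at_A:
  assumes "0 < d" "left_maximal i p" "periodic i p d"
  shows "trib i = A"
proof (rule ccontr)
  assume nA: "trib i \<noteq> A"
  then have "trib (i + p) \<noteq> A" using periodic_first[OF assms(3,1)] by simp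
  then have "trib (i - 1) = A" "trib (i + p - 1) = A" "0 < i"
    using trib_neq_A_between_A nA by auto
  moreover have "i + p - 1 = i - 1 + p" using \<open>0 < i\<close> by simp
  ultimately show False using assms(2) by (simp add: left_maximal_def)
qed

text \<open>Periods of images pull back letter by letter, because the letter after the image of
  \<open>x\<^sub>k\<close> determines \<open>x\<^sub>k\<close>.\<close>

lemma periodic_desubstitute_step:
  assumes pp: "sigma_pos (u + p') = sigma_pos u + p" and per: "periodic (sigma_pos u) p d"
    and per': "periodic u p' v" and lt: "sigma_pos (u + v) + 1 < sigma_pos u + d"
  shows "periodic u p' (Suc v)"
proof -
  have shift: "sigma_pos (u + v + p') = sigma_pos (u + v) + p"
    using sigma_pos_periodic[OF per'] pp by (simp add: ac_simps)
  have le: "sigma_pos u \<le> sigma_pos (u + v)" by simp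
  then have "Suc (sigma_pos (u + v)) - sigma_pos u < d" using lt by linarith
  then have "trib (sigma_pos u + (Suc (sigma_pos (u + v)) - sigma_pos u))
      = trib (sigma_pos u + (Suc (sigma_pos (u + v)) - sigma_pos u) + p)"
    using per unfolding periodic_def by blast
  then have "trib (Suc (sigma_pos (u + v))) = trib (Suc (sigma_pos (u + v + p')))"
    using le shift by simp
  then have "trib (u + v) = trib (u + v + p')" by (simp add: trib_Suc_sigma_pos)
  then show ?thesis using per' periodic_add[of u p' v 1] by (simp add: periodic_def)
qed

lemma periodic_desubstitute:
  assumes "sigma_pos (u + p') = sigma_pos u + p" "periodic (sigma_pos u) p d"
  shows "sigma_pos (u + v) + 1 < sigma_pos u + d \<Longrightarrow> periodic u p' (Suc v)"
proof (induction v)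
  case 0 then show ?case using periodic_desubstitute_step[OF assms, of 0] by (simp add: periodic_def)
next
  case (Suc v)
  have "sigma_pos (u + v) < sigma_pos (u + Suc v)" by simp
  then have "periodic u p' (Suc v)" using Suc.prems by (intro Suc.IH) linarith
  then show ?case using Suc.prems by (rule periodic_desubstitute_step[OF assms])
qed

lemma left_maximal_desubstitute:
  assumes "left_maximal (sigma_pos u) p" "sigma_pos (u + p') = sigma_pos u + p"
  shows "left_maximal u p'"
proof (cases u)
  case 0 then show ?thesis by (simp add: left_maximal_def)
next
  case (Suc u0)
  then have "sigma_pos u \<noteq> 0" by (metis sigma_pos_0 sigma_pos_eq_iff nat.simps(3))
  then have "trib (sigma_pos u - 1) \<noteq> trib (sigma_pos u - 1 + p)"
    using assms(1) by (simp add: left_maximal_def)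
  moreover have "sigma_pos u - 1 + p = sigma_pos (Suc (u0 + p')) - 1"
    using assms(2) Suc \<open>sigma_pos u \<noteq> 0\<close> by simp
  ultimately show ?thesis
    using trib_sigma_pos_Suc_minus_1[of u0] trib_sigma_pos_Suc_minus_1[of "u0 + p'"] Suc
    by (simp add: left_maximal_def)
qed

lemma periodic_preimage:
  assumes "sigma_pos (u + p') = sigma_pos u + p" "periodic (sigma_pos u) p d"
  obtains d' where "periodic u p' d'" "d \<le> sigma_pos (u + d') + 1 - sigma_pos u"
proof -
  define d' where "d' = (LEAST k. sigma_pos u + d \<le> sigma_pos (u + k) + 1)"
  have "sigma_pos u + d \<le> sigma_pos (u + d) + 1" using sigma_pos_add_ge[of u d] by simp
  then have d': "sigma_pos u + d \<le> sigma_pos (u + d') + 1"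
    unfolding d'_def by (rule LeastI)
  have "periodic u p' d'"
  proof (cases d')
    case 0 then show ?thesis by (simp add: periodic_def)
  next
    case (Suc v)
    then have "v < d'" by simp
    then have "\<not> sigma_pos u + d \<le> sigma_pos (u + v) + 1" unfolding d'_def by (rule not_less_Least)
    then show ?thesis using periodic_desubstitute[OF assms] Suc by simp
  qed
  with d' that show ?thesis by simp
qed

lemma left_maximal_run_desubstitute:
  assumes p: "2 \<le> p" and d: "0 < d" and lm: "left_maximal i p" and per: "periodic i p d"
  obtains u p' d' where "i = sigma_pos u" "0 < p'" "p' < p" "sigma_pos (u + p') = sigma_pos u + p"
    "left_maximal u p'" "periodic u p' d'" "d \<le> sigma_pos (u + d') + 1 - sigma_pos u"
proof -
  have "trib i = A" "trib (i + p) = A"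
    using left_maximal_periodic_at_A[OF d lm per] periodic_first[OF per d] by simp_all
  then obtain u w where u: "i = sigma_pos u" and w: "i + p = sigma_pos w"
    by (metis trib_eq_A_iff)
  then have "sigma_pos u < sigma_pos w" using p by linarith
  then have "u < w" by simp
  define p' where "p' = w - u"
  have pp: "sigma_pos (u + p') = sigma_pos u + p" using u w \<open>u < w\<close> by (simp add: p'_def)
  have p'0: "0 < p'" using \<open>u < w\<close> by (simp add: p'_def)
  have "p' < p"
  proof (cases "2 \<le> p'")
    case True then show ?thesis using sigma_pos_gap[of p' u] pp by simp
  next
    case False then show ?thesis using p'0 p by simp
  qed
  moreover have "left_maximal u p'" using left_maximal_desubstitute lm u pp by blast
  moreover obtain d' where "periodic u p' d'" "d \<le> sigma_pos (u + d') + 1 - sigma_pos u"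
    using periodic_preimage[OF pp per[unfolded u]] .
  ultimately show ?thesis using that u p'0 pp by blast
qed

subsection \<open>The runs \<open>W\<^sub>j\<close>\<close>

text \<open>When \<open>trib q = C\<close>, the factor \<open>aa\<close> sits at the image of
  that letter; applying \<open>\<sigma>\<close> \<open>j\<close> times, each time keeping the \<open>a\<close> that follows the image,
  places \<open>W\<^sub>j\<close> at \<open>run_pos j q\<close>.\<close>

fun run_word :: "nat \<Rightarrow> letter list" where
  "run_word 0 = [A, A]"
| "run_word (Suc j) = sigma (run_word j) @ [A]"

definition run_pos :: "nat \<Rightarrow> nat \<Rightarrow> nat" where
  "run_pos j q = (sigma_pos ^^ Suc j) q"

lemma run_pos_0: "run_pos 0 q = sigma_pos q"
  by (simp add: run_pos_def)

lemma run_pos_Suc: "run_pos (Suc j) q = sigma_pos (run_pos j q)"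
  by (simp add: run_pos_def)

lemma run_pos_mono: "q \<le> q' \<Longrightarrow> run_pos j q \<le> run_pos j q'"
  by (induction j) (simp_all add: run_pos_0 run_pos_Suc)

lemma factor_run_pos:
  assumes "trib q = C"
  shows "factor (run_pos j q) (length (run_word j)) = run_word j"
proof (induction j)
  case 0
  then show ?case using assms trib_Suc_sigma_pos[of q]
    by (simp add: run_pos_0 factor_def numeral_2_eq_2)
next
  case (Suc j)
  let ?r = "run_pos j q" and ?W = "run_word j"
  have "factor (sigma_pos ?r) (length (sigma ?W) + 1)
      = factor (sigma_pos ?r) (length (sigma ?W)) @ factor (sigma_pos ?r + length (sigma ?W)) 1"
    by (rule factor_add)
  also have "\<dots> = sigma ?W @ [A]"
  proof -
    have "sigma_pos ?r + length (sigma ?W) = sigma_pos (?r + length ?W)"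
      using sigma_pos_add[of ?r "length ?W"] Suc by simp
    then show ?thesis using factor_sigma_pos[of ?r "length ?W"] Suc by (simp add: factor_def)
  qed
  finally show ?case by (simp add: run_pos_Suc)
qed

lemma sigma_pos_run_end:
  "trib q = C \<Longrightarrow>
    sigma_pos (run_pos j q + length (run_word j)) + 1 = run_pos (Suc j) q + length (run_word (Suc j))"
  using sigma_pos_add[of "run_pos j q" "length (run_word j)"] by (simp add: factor_run_pos run_pos_Suc)

lemma take_run_word: "trib_len j \<le> length (run_word j) \<and> take (trib_len j) (run_word j) = trib_block j"
proof (induction j)
  case 0 then show ?case by (simp add: trib_len_def)
next
  case (Suc j)
  then obtain w where "run_word j = trib_block j @ w" by (metis append_take_drop_id)
  then show ?case by (simp add: trib_len_def)
qed

lemma sigma_pos_run_period: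
  assumes "trib q = C"
  shows "sigma_pos (run_pos j q + trib_len j) = run_pos (Suc j) q + trib_len (Suc j)"
proof -
  have "factor (run_pos j q) (trib_len j) = trib_block j"
    using factor_run_pos[OF assms, of j] take_run_word[of j]
    by (metis factor_add le_add_diff_inverse append_eq_conv_conj length_factor)
  then show ?thesis by (simp add: sigma_pos_add run_pos_Suc trib_len_def)
qed

lemma periodic_run:
  assumes "trib q = C"
  shows "periodic (run_pos j q) (trib_len j) (length (run_word j) - trib_len j)"
proof (induction j)
  case 0
  then show ?case using assms trib_Suc_sigma_pos[of q]
    by (simp add: periodic_def run_pos_0 trib_len_def)
next
  case (Suc j)
  let ?r = "run_pos j q" and ?t = "trib_len j" and ?L = "length (run_word j)"
  have "?r + ?t + (?L - ?t) = ?r + ?L" using take_run_word[of j] by simp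
  then have "sigma_pos (?r + ?L) + sigma_pos ?r = sigma_pos (?r + ?t) + sigma_pos (?r + (?L - ?t))"
    using sigma_pos_periodic[OF Suc] by simp
  moreover have "sigma_pos ?r \<le> sigma_pos (?r + (?L - ?t))" by simp
  ultimately have "sigma_pos (?r + (?L - ?t)) - sigma_pos ?r + 1 = length (run_word (Suc j)) - trib_len (Suc j)"
    using sigma_pos_run_end[OF assms, of j] sigma_pos_run_period[OF assms, of j]
    unfolding run_pos_Suc by linarith
  then show ?case
    using periodic_sigma[OF Suc] sigma_pos_run_period[OF assms, of j] by (simp add: run_pos_Suc)
qed

subsection \<open>Classification of left-maximal periodic factors\<close>

lemma periodic_period_one:
  assumes "0 < d" "periodic i 1 d"
  obtains q where "trib q = C" "i = sigma_pos q" "d \<le> 1"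
proof -
  have e: "trib i = trib (Suc i)" using periodic_first[OF assms(2,1)] by simp
  then have A: "trib i = A" using trib_neq_A_between_A[of i] by auto
  then obtain q where "i = sigma_pos q" "trib q = C" using AA_at_image_of_C e by metis
  moreover have "d \<le> 1"
  proof (rule ccontr)
    assume "\<not> d \<le> 1"
    then have "trib (i + 1) = trib (i + 1 + 1)"
      using assms(2)[unfolded periodic_def, rule_format, of 1] by simp
    then show False using no_AAA[of i] A e by simp
  qed
  ultimately show ?thesis using that by blast
qed

lemma short_run_image:
  assumes p: "2 \<le> p" and per: "periodic u p' d'" and short: "d' + 2 \<le> 2 * p'"
    and pp: "sigma_pos (u + p') = sigma_pos u + p" and d: "d \<le> sigma_pos (u + d') + 1 - sigma_pos u"
  shows "d + 2 \<le> 2 * p"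
proof (cases "d' < p'")
  case True
  then have "sigma_pos (u + d') < sigma_pos (u + p')" by simp
  then show ?thesis using pp d p by linarith
next
  case False
  define m where "m = d' - p'"
  have d': "d' = m + p'" and gap: "2 \<le> p' - m" using False short by (simp_all add: m_def)
  have "periodic u p' m" using periodic_mono[OF per] d' by simp
  then have "sigma_pos (u + d') + sigma_pos u = sigma_pos (u + p') + sigma_pos (u + m)"
    using sigma_pos_periodic[of u p' m] d' by (simp add: ac_simps)
  moreover have "sigma_pos (u + m) + (p' - m) + 1 \<le> sigma_pos (u + p')"
    using sigma_pos_gap[OF gap, of "u + m"] gap by simp
  moreover have "sigma_pos u \<le> sigma_pos (u + d')" by simp
  ultimately show ?thesis using d pp gap by linarith
qed

lemma long_run_image:
  assumes q: "trib q = C" and per: "periodic (run_pos j q) (trib_len j) d'"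
    and long: "d' + trib_len j \<le> length (run_word j)"
    and d: "d \<le> sigma_pos (run_pos j q + d') + 1 - run_pos (Suc j) q"
  shows "d + trib_len (Suc j) \<le> length (run_word (Suc j))"
proof -
  let ?r = "run_pos j q"
  have "sigma_pos (?r + trib_len j + d') + sigma_pos ?r = sigma_pos (?r + trib_len j) + sigma_pos (?r + d')"
    by (rule sigma_pos_periodic[OF per])
  moreover have "sigma_pos (?r + trib_len j + d') \<le> sigma_pos (?r + length (run_word j))"
    using long by simp
  moreover have "sigma_pos ?r \<le> sigma_pos (?r + d')" by simp
  ultimately show ?thesis
    using d sigma_pos_run_end[OF q, of j] sigma_pos_run_period[OF q, of j]
    unfolding run_pos_Suc by linarith
qed

theorem left_maximal_run_classification:
  assumes "0 < p" "left_maximal i p" "periodic i p d"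
  shows "d + 2 \<le> 2 * p \<or>
    (\<exists>j q. trib q = C \<and> i = run_pos j q \<and> p = trib_len j \<and> d + p \<le> length (run_word j))"
  using assms
proof (induction p arbitrary: i d rule: less_induct)
  case (less p)
  consider "d = 0" | "p = 1" "0 < d" | "2 \<le> p" "0 < d" using less.prems(1) by linarith
  then show ?case
  proof cases
    case 1 then show ?thesis using less.prems by simp
  next
    case 2
    then obtain q where "trib q = C" "i = sigma_pos q" "d \<le> 1"
      using periodic_period_one less.prems(3) by blast
    then show ?thesis using 2
      by (intro disjI2 exI[of _ 0] exI[of _ q]) (auto simp: trib_len_def run_pos_0)
  next
    case 3
    obtain u p' d' where D: "i = sigma_pos u" "0 < p'" "p' < p" "sigma_pos (u + p') = sigma_pos u + p"
      "left_maximal u p'" "periodic u p' d'" "d \<le> sigma_pos (u + d') + 1 - sigma_pos u"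
      using left_maximal_run_desubstitute[OF 3 less.prems(2,3)] by blast
    from less.IH[OF D(3) D(2) D(5) D(6)] show ?thesis
    proof
      assume "d' + 2 \<le> 2 * p'"
      then show ?thesis using short_run_image[OF 3(1) D(6) _ D(4) D(7)] by blast
    next
      assume "\<exists>j q. trib q = C \<and> u = run_pos j q \<and> p' = trib_len j \<and> d' + p' \<le> length (run_word j)"
      then obtain j q where J: "trib q = C" "u = run_pos j q" "p' = trib_len j"
        "d' + p' \<le> length (run_word j)" by blast
      have "i = run_pos (Suc j) q" "p = trib_len (Suc j)"
        using D(1,4) J sigma_pos_run_period[OF J(1), of j] by (simp_all add: run_pos_Suc)
      moreover have "d + p \<le> length (run_word (Suc j))"
        using long_run_image[OF J(1), of j d' d] J D(1,6,7) calculation by (simp add: run_pos_Suc)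
      ultimately show ?thesis using J(1) by blast
    qed
  qed
qed

subsection \<open>Tribonacci and kernel numbers\<close>

lemma trib_induct [case_names 0 1 2 step]:
  fixes P :: "nat \<Rightarrow> bool"
  assumes "P 0" "P 1" "P 2" "\<And>n. P n \<Longrightarrow> P (n + 1) \<Longrightarrow> P (n + 2) \<Longrightarrow> P (n + 3)"
  shows "P n"
proof -
  have step: "\<And>n. P n \<Longrightarrow> P (Suc n) \<Longrightarrow> P (Suc (Suc n)) \<Longrightarrow> P (Suc (Suc (Suc n)))"
    using assms(4) by (simp add: eval_nat_numeral)
  have "P n \<and> P (Suc n) \<and> P (Suc (Suc n))"
    by (induction n) (use assms(1-3) step in \<open>auto simp: numeral_2_eq_2\<close>)
  then show ?thesis by simp
qed

lemma trib_len_Suc_Suc: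
  "trib_len (Suc (Suc n)) = trib_len (Suc n) + trib_len n + length ((sigma ^^ n) [C])"
  using trib_len_Suc[of "Suc n"] by (simp add: funpow_sigma_B_Suc trib_len_def del: funpow.simps)

lemma trib_len_rec: "trib_len (n + 3) = trib_len (n + 2) + trib_len (n + 1) + trib_len n"
  using trib_len_Suc_Suc[of "Suc n"]
  by (simp add: eval_nat_numeral funpow_sigma_C_Suc trib_len_def del: funpow.simps)

lemma trib_len_0_to_6:
  "trib_len 0 = 1" "trib_len 1 = 2" "trib_len 2 = 4" "trib_len 3 = 7"
  "trib_len 4 = 13" "trib_len 5 = 24" "trib_len 6 = 44"
  by (simp_all add: trib_len_def sigma_def eval_nat_numeral)

lemma trib_len_mono: "m \<le> n \<Longrightarrow> trib_len m \<le> trib_len n"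
  using strict_mono_trib_len strict_mono_less_eq by blast

lemma trib_len_Suc_le_double: "trib_len (n + 1) \<le> 2 * trib_len n"
proof (cases n)
  case 0 then show ?thesis by (simp add: trib_len_def sigma_def)
next
  case (Suc k)
  have "length ((sigma ^^ k) [C]) \<le> length ((sigma ^^ k) [B])"
    by (cases k) (simp_all add: funpow_sigma_B_Suc funpow_sigma_C_Suc del: funpow.simps)
  then show ?thesis using Suc trib_len_Suc_Suc[of k] trib_len_Suc[of k] by simp
qed

lemma knum_rec: "knum (n + 3) = knum (n + 2) + knum (n + 1) + knum n - 1"
  by (simp add: eval_nat_numeral)

lemma knum_5_to_7: "knum 5 = 3" "knum 6 = 5" "knum 7 = 9"
  by (simp_all add: eval_nat_numeral)

lemma knum_closed_form: "2 * knum (m + 5) = int (trib_len (m + 2)) + int (trib_len m) + 1"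
proof (induction m rule: trib_induct)
  case step: (step n)
  then show ?case using knum_rec[of "n + 5"] trib_len_rec[of "n + 2"] trib_len_rec[of n] by simp
qed (simp_all add: knum_5_to_7 trib_len_def sigma_def eval_nat_numeral)

definition kern :: "nat \<Rightarrow> nat" where
  "kern j = nat (knum (j + 5))"

lemma kern_closed_form: "2 * kern j = trib_len (j + 2) + trib_len j + 1"
  using knum_closed_form[of j] by (simp add: kern_def)

lemma of_nat_kern: "int (kern j) = knum (j + 5)"
  using knum_closed_form[of j] by (simp add: kern_def)

lemma kern_le: "kern j \<le> trib_len (j + 2)"
  using kern_closed_form[of j] trib_len_mono[of j "j + 2"] by linarith

lemma kern_ge: "3 \<le> kern j"
  using kern_closed_form[of j] trib_len_mono[of 2 "j + 2"] trib_len_0_to_6(3) trib_len_gt[of j] by linarith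

lemma kern_add_3: "kern (j + 3) = kern j + trib_len (j + 4)"
  using kern_closed_form[of j] kern_closed_form[of "j + 3"]
    trib_len_rec[of "j + 2"] trib_len_rec[of "j + 1"] trib_len_rec[of j]
  by (simp add: eval_nat_numeral)

lemma kern_0: "kern 0 = 3"
  by (simp add: kern_def knum_5_to_7)

subsection \<open>The first occurrences of the runs\<close>

lemma sigma_pos_trib_len: "sigma_pos (trib_len n) = trib_len (Suc n)"
  unfolding sigma_pos_def factor_0_trib_len by (simp add: trib_len_def)

text \<open>For \<open>i \<ge> 2\<close> the word \<open>\<sigma>\<^sup>i(b)\<close> following \<open>\<sigma>\<^sup>i(a)\<close> in \<open>\<sigma>\<^sup>i\<^sup>+\<^sup>1(a)\<close> is a prefix of \<open>\<sigma>\<^sup>i(a)\<close>.\<close>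

lemma factor_trib_len_shift:
  assumes "2 \<le> i" "m \<le> trib_len (Suc i) - trib_len i"
  shows "factor (trib_len i) m = factor 0 m"
proof -
  obtain k where i: "i = Suc (Suc k)" using assms(1) by (metis add_2_eq_Suc le_Suc_ex)
  let ?U = "(sigma ^^ i) [B]"
  have U: "?U = trib_block (Suc k) @ trib_block k"
    using i by (simp add: funpow_sigma_B_Suc funpow_sigma_C_Suc del: funpow.simps)
  have "trib_block i = trib_block (Suc k) @ trib_block k @ (sigma ^^ k) [C]"
    using i by (simp add: trib_block_Suc funpow_sigma_B_Suc del: funpow.simps)
  then have "prefix ?U (trib_block i)" using U by simp
  moreover have m: "m \<le> length ?U" using assms(2) by (simp add: trib_len_Suc del: funpow.simps)
  moreover have "m \<le> trib_len i"
    using assms(2) trib_len_Suc_le_double[of i] by simp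
  ultimately have "take m ?U = factor 0 m"
    by (metis take_trib_block prefix_def take_append diff_is_0_eq append_Nil2 take_0)
  moreover have "factor 0 (trib_len i) @ factor (trib_len i) m = trib_block i @ take m ?U"
    using take_trib_block[of "trib_len i + m" "Suc i"] m factor_add[of 0 "trib_len i" m]
    by (simp add: trib_len_Suc trib_block_Suc trib_len_def del: funpow.simps)
  ultimately show ?thesis by (simp add: factor_0_trib_len)
qed

lemma sigma_pos_trib_len_add:
  assumes "2 \<le> i" "m \<le> trib_len (Suc i) - trib_len i"
  shows "sigma_pos (trib_len i + m) = trib_len (Suc i) + sigma_pos m"
  using sigma_pos_add[of "trib_len i" m] factor_trib_len_shift[OF assms] sigma_pos_trib_len[of i]
  by (simp add: sigma_pos_def)

lemma factor_0_le_13: "k \<le> 13 \<Longrightarrow> factor 0 k = take k [A, B, A, C, A, B, A, A, B, A, C, A, B]"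
  using take_trib_block[of k 4] trib_len_0_to_6(5)
  by (simp add: sigma_def eval_nat_numeral)

lemma trib_0_to_3: "trib 0 = A" "trib 1 = B" "trib 2 = A" "trib 3 = C"
  using factor_0_le_13[of 4] by (simp_all add: factor_def eval_nat_numeral)

lemma sigma_pos_1_3_7: "sigma_pos 1 = 2" "sigma_pos 3 = 6" "sigma_pos 7 = 13"
  by (simp_all add: sigma_pos_def factor_0_le_13 sigma_def)

lemma trib_eq_C_ge_3:
  assumes "trib q = C" shows "3 \<le> q"
proof (rule ccontr)
  assume "\<not> 3 \<le> q"
  then have "q = 0 \<or> q = 1 \<or> q = 2" by auto
  then show False using trib_0_to_3 assms by auto
qed

lemma sigma_pos_kern: "sigma_pos (kern j - 2) = kern (j + 1) - 3"
proof (induction j rule: trib_induct)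
  case 0
  have "kern 0 - 2 = 1" "kern (0 + 1) - 3 = 2" by (simp_all add: kern_def eval_nat_numeral)
  then show ?case by (simp only: sigma_pos_1_3_7)
next
  case 1
  have "kern 1 - 2 = 3" "kern (1 + 1) - 3 = 6" by (simp_all add: kern_def eval_nat_numeral)
  then show ?case by (simp only: sigma_pos_1_3_7)
next
  case 2
  have "kern 2 - 2 = 7" "kern (2 + 1) - 3 = 13" by (simp_all add: kern_def eval_nat_numeral)
  then show ?case by (simp only: sigma_pos_1_3_7)
next
  case (step n)
  have "sigma_pos (kern (n + 3) - 2) = sigma_pos (trib_len (n + 4) + (kern n - 2))"
    using kern_add_3[of n] kern_ge[of n] by simp
  also have "\<dots> = trib_len (Suc (n + 4)) + sigma_pos (kern n - 2)"
    by (rule sigma_pos_trib_len_add)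
      (use kern_le[of n] trib_len_rec[of "n + 2"] in \<open>simp_all add: eval_nat_numeral\<close>)
  also have "\<dots> = kern (n + 3 + 1) - 3"
    using step(1) kern_add_3[of "n + 1"] kern_ge[of "n + 1"] by (simp add: eval_nat_numeral)
  finally show ?case .
qed

definition cube_start :: "nat \<Rightarrow> nat" where
  "cube_start j = trib_len (j + 3) + 2 * trib_len j"

definition cube_end :: "nat \<Rightarrow> nat" where
  "cube_end j = trib_len (j + 3) + kern j - 2"

lemma run_pos_3_add_trib_len: "run_pos j 3 + trib_len j = trib_len (j + 3)"
proof (induction j)
  case 0 then show ?case by (simp add: run_pos_0 sigma_pos_1_3_7 trib_len_0_to_6)
next
  case (Suc j)
  then show ?case
    using sigma_pos_run_period[OF trib_0_to_3(4), of j] sigma_pos_trib_len[of "j + 3"] by simp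
qed

lemma run_pos_3_cube_start: "run_pos j 3 + 3 * trib_len j = cube_start j"
  using run_pos_3_add_trib_len[of j] by (simp add: cube_start_def)

lemma run_pos_3_cube_end: "run_pos j 3 + length (run_word j) = cube_end j"
  unfolding cube_end_def
proof (induction j)
  case 0 then show ?case by (simp add: run_pos_0 sigma_pos_1_3_7 trib_len_0_to_6 kern_0)
next
  case (Suc j)
  have "sigma_pos (trib_len (j + 3) + (kern j - 2)) = trib_len (Suc (j + 3)) + sigma_pos (kern j - 2)"
    by (rule sigma_pos_trib_len_add)
      (use kern_le[of j] trib_len_rec[of "j + 1"] in \<open>simp_all add: eval_nat_numeral\<close>)
  then show ?case
    using Suc sigma_pos_run_end[OF trib_0_to_3(4), of j] sigma_pos_kern[of j] kern_ge[of j]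
      kern_ge[of "Suc j"]
    by (simp add: eval_nat_numeral)
qed

lemma length_run_word: "length (run_word j) + 2 = trib_len j + kern j"
  using run_pos_3_add_trib_len[of j] run_pos_3_cube_end[of j] kern_ge[of j]
  by (simp add: cube_end_def)

lemma length_run_word_less_3: "j < 3 \<Longrightarrow> length (run_word j) < 3 * trib_len j"
  by (auto simp: less_Suc_eq numeral_3_eq_3 sigma_def trib_len_def)

lemma length_run_word_less_4: "length (run_word j) < 4 * trib_len j"
  using length_run_word[of j] kern_closed_form[of j]
    trib_len_Suc_le_double[of j] trib_len_Suc_le_double[of "j + 1"] trib_len_gt[of j]
  by (simp add: eval_nat_numeral)

subsection \<open>Periodic factors have exponent less than four\<close>

lemma periodic_extend_left:
  "periodic z p d \<Longrightarrow> \<exists>i\<le>z. left_maximal i p \<and> periodic i p (z + d - i)"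
proof (induction z arbitrary: d)
  case 0 then show ?case by (auto simp: left_maximal_def)
next
  case (Suc z)
  show ?case
  proof (cases "left_maximal (Suc z) p")
    case True then show ?thesis using Suc.prems by auto
  next
    case False
    then have "trib z = trib (z + p)" by (simp add: left_maximal_def)
    then have "periodic z p (Suc d)"
      using Suc.prems by (auto simp: periodic_def less_Suc_eq_0_disj)
    then obtain i where "i \<le> z" "left_maximal i p" "periodic i p (z + Suc d - i)"
      using Suc.IH by blast
    then show ?thesis by (intro exI[of _ i]) simp
  qed
qed

lemma periodic_less_three_periods:
  assumes "0 < p" "periodic z p d"
  shows "d < 3 * p"
proof -
  obtain i where i: "i \<le> z" "left_maximal i p" "periodic i p (z + d - i)"
    using periodic_extend_left[OF assms(2)] by blast
  from left_maximal_run_classification[OF assms(1) i(2,3)] show ?thesis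
  proof
    assume "z + d - i + 2 \<le> 2 * p" then show ?thesis using i(1) by linarith
  next
    assume "\<exists>j q. trib q = C \<and> i = run_pos j q \<and> p = trib_len j \<and> z + d - i + p \<le> length (run_word j)"
    then obtain j where "p = trib_len j" "z + d - i + p \<le> length (run_word j)" by blast
    then show ?thesis using length_run_word_less_4[of j] i(1) by linarith
  qed
qed

subsection \<open>Cubes\<close>

lemma cube_factor_iff:
  "factor z (3 * length w) = w @ w @ w \<longleftrightarrow>
    w = factor z (length w) \<and> periodic z (length w) (2 * length w)"
proof -
  let ?p = "length w"
  have "factor z (?p + (?p + ?p)) = factor z ?p @ factor (z + ?p) ?p @ factor (z + ?p + ?p) ?p"
    by (simp add: factor_add)
  then have "factor z (3 * ?p) = factor z ?p @ factor (z + ?p) ?p @ factor (z + 2 * ?p) ?p"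
    by (simp add: numeral_3_eq_3 mult_2 add.assoc)
  moreover have "periodic z ?p (2 * ?p) \<longleftrightarrow>
      factor z ?p = factor (z + ?p) ?p \<and> factor (z + ?p) ?p = factor (z + 2 * ?p) ?p"
    using periodic_add[of z ?p ?p ?p] by (simp add: periodic_iff_factor mult_2 add.assoc)
  ultimately show ?thesis by auto
qed

lemma suffix_trib_prefix:
  "suffix v (trib_prefix n) \<longleftrightarrow> length v \<le> n \<and> v = factor (n - length v) (length v)"
proof
  assume "suffix v (trib_prefix n)"
  then obtain u where u: "factor 0 n = u @ v" by (auto simp: suffix_def trib_prefix_eq_factor)
  then have "length (factor 0 n) = length u + length v" by simp
  then have "length v \<le> n" "length u = n - length v" by auto
  with u show "length v \<le> n \<and> v = factor (n - length v) (length v)"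
    using factor_add[of 0 "n - length v" "length v"] by simp
next
  assume "length v \<le> n \<and> v = factor (n - length v) (length v)"
  then show "suffix v (trib_prefix n)"
    using factor_add[of 0 "n - length v" "length v"] by (auto simp: suffix_def trib_prefix_eq_factor)
qed

lemma sublist_trib_prefix:
  "sublist v (trib_prefix n) \<longleftrightarrow> (\<exists>z. z + length v \<le> n \<and> v = factor z (length v))"
proof
  assume "sublist v (trib_prefix n)"
  then obtain u s where e: "factor 0 n = u @ v @ s" by (auto simp: sublist_def trib_prefix_eq_factor)
  have "length (factor 0 n) = length u + length v + length s" using e by simp
  then have l: "length u + length v + length s = n" by simp
  then have "factor 0 n = factor 0 (length u) @ factor (length u) (length v) @
      factor (length u + length v) (length s)"
    using factor_add[of 0 "length u" "length v + length s"] factor_add[of "length u" "length v" "length s"]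
    by (simp add: add.assoc)
  then have "v = factor (length u) (length v)" using e by simp
  then show "\<exists>z. z + length v \<le> n \<and> v = factor z (length v)" using l by (intro exI[of _ "length u"]) simp
next
  assume "\<exists>z. z + length v \<le> n \<and> v = factor z (length v)"
  then obtain z where z: "z + length v \<le> n" "v = factor z (length v)" by blast
  then have "factor 0 n = factor 0 z @ v @ factor (z + length v) (n - (z + length v))"
    using factor_add[of 0 z "length v"] factor_add[of 0 "z + length v" "n - (z + length v)"] by simp
  then show "sublist v (trib_prefix n)" by (auto simp: sublist_def trib_prefix_eq_factor)
qed

text \<open>\<open>T[1,n]\<close> is \<open>factor 0 n\<close>, so a cube of period \<open>p\<close> that is a suffix of it starts at \<open>n - 3p\<close>.\<close>

definition new_cube_period :: "nat \<Rightarrow> nat \<Rightarrow> bool" where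
  "new_cube_period n p \<longleftrightarrow> 0 < p \<and> 3 * p \<le> n \<and> periodic (n - 3 * p) p (2 * p) \<and>
     (\<forall>z. z + 3 * p < n \<longrightarrow> factor z (3 * p) \<noteq> factor (n - 3 * p) (3 * p))"

lemma new_cube_word_iff:
  "w \<noteq> [] \<and> suffix (w @ w @ w) (trib_prefix n) \<and> \<not> sublist (w @ w @ w) (trib_prefix (n - 1))
    \<longleftrightarrow> new_cube_period n (length w) \<and> w = factor (n - 3 * length w) (length w)"
  (is "?L \<longleftrightarrow> ?R")
proof
  let ?p = "length w"
  have l: "length (w @ w @ w) = 3 * ?p" by simp
  assume ?L
  then have w: "0 < ?p" "3 * ?p \<le> n" "factor (n - 3 * ?p) (3 * ?p) = w @ w @ w"
      "\<forall>z. z + 3 * ?p \<le> n - 1 \<longrightarrow> factor z (3 * ?p) \<noteq> w @ w @ w"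
    unfolding suffix_trib_prefix sublist_trib_prefix l by auto
  then have "w = factor (n - 3 * ?p) ?p" and "periodic (n - 3 * ?p) ?p (2 * ?p)"
    using cube_factor_iff by blast+
  moreover have "\<forall>z. z + 3 * ?p < n \<longrightarrow> factor z (3 * ?p) \<noteq> factor (n - 3 * ?p) (3 * ?p)"
    using w(3,4) by auto
  ultimately show ?R using w(1,2) by (simp add: new_cube_period_def)
next
  assume ?R
  then have new: "new_cube_period n (length w)" and w: "w = factor (n - 3 * length w) (length w)"
    by simp_all
  let ?p = "length w"
  have l: "length (w @ w @ w) = 3 * ?p" by simp
  have p: "0 < ?p" "3 * ?p \<le> n" using new by (simp_all add: new_cube_period_def)
  have www: "factor (n - 3 * ?p) (3 * ?p) = w @ w @ w"
    using new w cube_factor_iff[of "n - 3 * ?p" w] by (simp add: new_cube_period_def)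
  have fresh: "\<forall>z. z + 3 * ?p < n \<longrightarrow> factor z (3 * ?p) \<noteq> factor (n - 3 * ?p) (3 * ?p)"
    using new unfolding new_cube_period_def by blast
  have "\<not> sublist (w @ w @ w) (trib_prefix (n - 1))"
  proof
    assume "sublist (w @ w @ w) (trib_prefix (n - 1))"
    then obtain z where z: "z + 3 * ?p \<le> n - 1" "factor z (3 * ?p) = w @ w @ w"
      unfolding sublist_trib_prefix l by metis
    have "z + 3 * ?p < n" using z(1) p(1) by linarith
    then have "factor z (3 * ?p) \<noteq> factor (n - 3 * ?p) (3 * ?p)" using fresh by blast
    then show False using z(2) www by simp
  qed
  then show ?L unfolding suffix_trib_prefix l using p www by simp
qed

lemma new_cubes_eq:
  "{w. w \<noteq> [] \<and> suffix (w @ w @ w) (trib_prefix n) \<and> \<not> sublist (w @ w @ w) (trib_prefix (n - 1))}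
    = (\<lambda>p. factor (n - 3 * p) p) ` {p. new_cube_period n p}"
  unfolding new_cube_word_iff by (auto simp: image_iff)

lemma cube_count_eq_card: "cube_count n = card {p. new_cube_period n p}"
proof -
  have "inj_on (\<lambda>p. factor (n - 3 * p) p) {p. new_cube_period n p}"
    by (rule inj_onI) (metis length_factor)
  then show ?thesis unfolding cube_count_def new_cubes_eq by (rule card_image)
qed

lemma factor_shift_less_three:
  assumes "0 < s" "factor x d = factor (x + s) d"
  shows "d < 3 * s"
  using periodic_less_three_periods assms by (simp add: periodic_iff_factor)

lemma periodic_factor_cong:
  assumes "factor z (d + p) = factor z' (d + p)" "periodic z p d"
  shows "periodic z' p d"
proof -
  have "\<And>y. y < d + p \<Longrightarrow> trib (z + y) = trib (z' + y)"
    using assms(1) nth_factor by metis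
  then show ?thesis using assms(2) by (simp add: periodic_def add.assoc)
qed

lemma factor_take_drop: "r + l \<le> L \<Longrightarrow> factor (i + r) l = take l (drop r (factor i L))"
  by (rule nth_equalityI) (simp_all add: add.assoc)

lemma run_occurrences_agree:
  assumes "trib q = C" "trib q' = C" "r + l \<le> length (run_word j)"
  shows "factor (run_pos j q + r) l = factor (run_pos j q' + r) l"
  using factor_take_drop[OF assms(3)] factor_run_pos[OF assms(1)] factor_run_pos[OF assms(2)]
  by metis

lemma periodic_cube_in_first_run:
  assumes "0 < p" "periodic z p (2 * p)"
  obtains j r where "3 \<le> j" "p = trib_len j" "r + 3 * p \<le> length (run_word j)"
    "run_pos j 3 + r \<le> z" "factor z (3 * p) = factor (run_pos j 3 + r) (3 * p)"
proof -
  obtain i where i: "i \<le> z" "left_maximal i p" "periodic i p (z + 2 * p - i)"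
    using periodic_extend_left[OF assms(2)] by blast
  have "\<not> z + 2 * p - i + 2 \<le> 2 * p" using i(1) by simp
  then obtain j q where J: "trib q = C" "i = run_pos j q" "p = trib_len j"
      "z + 2 * p - i + p \<le> length (run_word j)"
    using left_maximal_run_classification[OF assms(1) i(2,3)] by blast
  define r where "r = z - i"
  have r: "r + 3 * p \<le> length (run_word j)" using J(4) i(1) by (simp add: r_def)
  have "3 \<le> j"
  proof (rule ccontr)
    assume "\<not> 3 \<le> j"
    then show False using length_run_word_less_3[of j] J(3) r by simp
  qed
  moreover have "run_pos j 3 + r \<le> z"
    using run_pos_mono[OF trib_eq_C_ge_3[OF J(1)], of j] J(2) i(1) by (simp add: r_def)
  moreover have "factor z (3 * p) = factor (run_pos j 3 + r) (3 * p)"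
    using run_occurrences_agree[OF J(1) trib_0_to_3(4) r] J(2) i(1) by (simp add: r_def)
  ultimately show ?thesis using that J(3) r by blast
qed

lemma run_cube_offset_unique:
  assumes "r + 3 * trib_len j \<le> length (run_word j)" "r' + 3 * trib_len j \<le> length (run_word j)"
    and "factor (i + r) (3 * trib_len j) = factor (i + r') (3 * trib_len j)"
  shows "r = r'"
proof -
  have "r < trib_len j" "r' < trib_len j" using assms(1,2) length_run_word_less_4[of j] by linarith+
  moreover have False if "a < b" "b < trib_len j"
      "factor (i + a) (3 * trib_len j) = factor (i + b) (3 * trib_len j)" for a b
    using factor_shift_less_three[of "b - a" "i + a" "3 * trib_len j"] that by simp
  ultimately show ?thesis using assms(3) by (metis linorder_neqE_nat)
qed

lemma periodic_first_run_cube: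
  assumes "r + 3 * trib_len j \<le> length (run_word j)"
  shows "periodic (run_pos j 3 + r) (trib_len j) (2 * trib_len j)"
proof -
  have "periodic (run_pos j 3) (trib_len j) (length (run_word j) - trib_len j)"
    using periodic_run[OF trib_0_to_3(4)] .
  then show ?thesis
    using assms periodic_add[of "run_pos j 3" "trib_len j" r "2 * trib_len j"] periodic_mono by simp
qed

lemma first_run_cube_not_earlier:
  assumes r: "r + 3 * trib_len j \<le> length (run_word j)" and z: "z < run_pos j 3 + r"
  shows "factor z (3 * trib_len j) \<noteq> factor (run_pos j 3 + r) (3 * trib_len j)"
proof
  let ?p = "trib_len j"
  assume eq: "factor z (3 * ?p) = factor (run_pos j 3 + r) (3 * ?p)"
  then have "periodic z ?p (2 * ?p)"
    using periodic_factor_cong[of "run_pos j 3 + r" "2 * ?p" ?p z] periodic_first_run_cube[OF r]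
    by simp
  then obtain j' r' where J': "?p = trib_len j'" "r' + 3 * ?p \<le> length (run_word j')"
      "run_pos j' 3 + r' \<le> z" "factor z (3 * ?p) = factor (run_pos j' 3 + r') (3 * ?p)"
    using periodic_cube_in_first_run trib_len_gt[of j] by (metis gr_zeroI less_zeroE)
  have "j' = j" using J'(1) strict_mono_trib_len strict_mono_eq by metis
  then have "r' = r"
    using run_cube_offset_unique[of r' j r "run_pos j 3"] J'(2,4) eq r by simp
  then show False using J'(3)[unfolded \<open>j' = j\<close>] z by linarith
qed

lemma new_cube_period_iff:
  "new_cube_period n p \<longleftrightarrow> (\<exists>j\<ge>3. p = trib_len j \<and> cube_start j \<le> n \<and> n \<le> cube_end j)"
proof
  assume new: "new_cube_period n p"
  let ?z = "n - 3 * p"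
  have p: "0 < p" "3 * p \<le> n" "periodic ?z p (2 * p)" using new by (simp_all add: new_cube_period_def)
  obtain j r where J: "3 \<le> j" "p = trib_len j" "r + 3 * p \<le> length (run_word j)"
      "run_pos j 3 + r \<le> ?z" "factor ?z (3 * p) = factor (run_pos j 3 + r) (3 * p)"
    using periodic_cube_in_first_run[OF p(1,3)] by blast
  have "\<not> run_pos j 3 + r + 3 * p < n" using new J(5) by (auto simp: new_cube_period_def)
  then have "n = run_pos j 3 + r + 3 * p" using J(4) p(2) by linarith
  then show "\<exists>j\<ge>3. p = trib_len j \<and> cube_start j \<le> n \<and> n \<le> cube_end j"
    using J(1-3) run_pos_3_cube_start[of j] run_pos_3_cube_end[of j] by (intro exI[of _ j]) auto
next
  assume "\<exists>j\<ge>3. p = trib_len j \<and> cube_start j \<le> n \<and> n \<le> cube_end j"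
  then obtain j where J: "p = trib_len j" "cube_start j \<le> n" "n \<le> cube_end j" by blast
  define r where "r = n - 3 * p - run_pos j 3"
  have z: "n - 3 * p = run_pos j 3 + r" and r: "r + 3 * p \<le> length (run_word j)"
    using J run_pos_3_cube_start[of j] run_pos_3_cube_end[of j] by (simp_all add: r_def)
  have "0 < p" using J(1) trib_len_gt[of j] by simp
  moreover have "3 * p \<le> n" using J(1,2) run_pos_3_cube_start[of j] by simp
  moreover have "periodic (n - 3 * p) p (2 * p)" using periodic_first_run_cube r J(1) z by simp
  moreover have "factor z' (3 * p) \<noteq> factor (n - 3 * p) (3 * p)" if "z' + 3 * p < n" for z'
    using first_run_cube_not_earlier[of r j z'] r J(1) z that by simp
  ultimately show "new_cube_period n p" unfolding new_cube_period_def by blast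
qed

lemma strict_mono_cube_start: "strict_mono cube_start"
  unfolding strict_mono_Suc_iff
proof
  fix j
  have "trib_len (j + 3) < trib_len (Suc j + 3)" "trib_len j < trib_len (Suc j)"
    using strict_mono_trib_len by (simp_all add: strict_mono_less)
  then show "cube_start j < cube_start (Suc j)" by (simp add: cube_start_def)
qed

lemma cube_start_mono: "i \<le> j \<Longrightarrow> cube_start i \<le> cube_start j"
  using strict_mono_cube_start strict_mono_less_eq by blast

lemma cube_end_less_cube_start_Suc: "cube_end j < cube_start (Suc j)"
  using kern_le[of j] trib_len_rec[of "j + 1"] trib_len_gt[of "Suc j"]
  by (simp add: cube_start_def cube_end_def eval_nat_numeral)

lemma cube_start_3: "cube_start 3 = 58"
  by (simp add: cube_start_def trib_len_0_to_6)

lemma cube_count_window: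
  assumes "3 \<le> j" "cube_start j \<le> n" "n < cube_start (Suc j)"
  shows "cube_count n = (if n \<le> cube_end j then 1 else 0)"
proof -
  have unique: "j' = j" if "cube_start j' \<le> n" "n \<le> cube_end j'" for j'
  proof (rule linorder_cases[of j' j])
    assume "j' < j"
    then show ?thesis
      using that cube_end_less_cube_start_Suc[of j'] cube_start_mono[of "Suc j'" j] assms(2) by simp
  next
    assume "j < j'"
    then show ?thesis using that cube_start_mono[of "Suc j" j'] assms(3) by simp
  qed
  have "new_cube_period n p \<longleftrightarrow> p = trib_len j \<and> n \<le> cube_end j" for p
  proof
    assume "new_cube_period n p"
    then obtain j' where "p = trib_len j'" "cube_start j' \<le> n" "n \<le> cube_end j'"
      unfolding new_cube_period_iff by blast
    then show "p = trib_len j \<and> n \<le> cube_end j" using unique by blast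
  next
    assume "p = trib_len j \<and> n \<le> cube_end j"
    then show "new_cube_period n p" unfolding new_cube_period_iff using assms by blast
  qed
  then have "{p. new_cube_period n p} = (if n \<le> cube_end j then {trib_len j} else {})" by auto
  then show ?thesis by (simp add: cube_count_eq_card)
qed

lemma cube_count_below_58:
  assumes "n < 58" shows "cube_count n = 0"
proof -
  have "\<not> new_cube_period n p" for p
  proof
    assume "new_cube_period n p"
    then obtain j where "3 \<le> j" "cube_start j \<le> n" unfolding new_cube_period_iff by blast
    then show False using cube_start_mono[of 3 j] cube_start_3 assms by simp
  qed
  then show ?thesis by (simp add: cube_count_eq_card)
qed

lemma cube_window_exists:
  assumes "58 \<le> n"
  obtains j where "3 \<le> j" "cube_start j \<le> n" "n < cube_start (Suc j)"
proof -
  have "\<exists>j\<ge>3. cube_start j \<le> n \<and> n < cube_start (Suc j)"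
    using assms
  proof (induction n rule: dec_induct)
    case base
    then show ?case
      using strict_mono_less[OF strict_mono_cube_start, of 3 4] cube_start_3
    by (intro exI[of _ 3]) (simp add: eval_nat_numeral)
  next
    case (step n)
    then obtain j where "3 \<le> j" "cube_start j \<le> n" "n < cube_start (Suc j)" by blast
    then show ?case
      using strict_mono_cube_start[unfolded strict_mono_Suc_iff, rule_format, of "Suc j"]
      by (cases "Suc n = cube_start (Suc j)") (auto intro: exI[of _ "Suc j"])
  qed
  then show ?thesis using that by blast
qed

lemma tnum_of_nat: "tnum (int k) = int (trib_len k)"
  by (simp add: tnum_def trib_len_def)

lemma tnum_window_end_le_58: "2 \<le> m \<Longrightarrow> m \<le> 6 \<Longrightarrow> tnum m + 2 * tnum (m - 3) \<le> 58"
proof -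
  assume "2 \<le> m" "m \<le> 6"
  then have "m = 2 \<or> m = 3 \<or> m = 4 \<or> m = 5 \<or> m = 6" by auto
  then show ?thesis by (elim disjE) (simp_all add: tnum_def sigma_def eval_nat_numeral)
qed

lemma tnum_window_iff:
  assumes "m = int j + 4"
  shows "tnum (m - 1) + 2 * tnum (m - 4) \<le> int n \<and> int n < tnum m + 2 * tnum (m - 3)
    \<longleftrightarrow> cube_start j \<le> n \<and> n < cube_start (Suc j)"
proof -
  have m: "m = int (Suc j + 3)" using assms by simp
  have "int (Suc j + 3) - 1 = int (j + 3)" "int (Suc j + 3) - 4 = int j"
    "int (Suc j + 3) - 3 = int (Suc j)"
    by simp_all
  then have "tnum (m - 1) + 2 * tnum (m - 4) = int (cube_start j)"
    "tnum m + 2 * tnum (m - 3) = int (cube_start (Suc j))"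
    by (simp_all only: m tnum_of_nat) (simp_all add: cube_start_def)
  then show ?thesis by simp
qed

lemma tnum_cube_end:
  assumes "m = int j + 4"
  shows "tnum (m - 1) + knum (nat (m + 1)) - 2 = int (cube_end j)"
proof -
  have "m - 1 = int (j + 3)" "nat (m + 1) = j + 5" using assms by simp_all
  then have "tnum (m - 1) + knum (nat (m + 1)) - 2 = int (trib_len (j + 3)) + int (kern j) - 2"
    by (simp only: tnum_of_nat of_nat_kern)
  then show ?thesis using kern_ge[of j] by (simp add: cube_end_def)
qed

theorem mainTheorem5:
  shows "(\<forall>n. 1 \<le> n \<and> n \<le> 57 \<longrightarrow> cube_count n = 0)
    \<and> (\<forall>n::nat. n \<ge> 58 \<longrightarrow>
         (\<exists>m::int. m \<ge> 2 \<and> tnum (m - 1) + 2 * tnum (m - 4) \<le> int n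
                    \<and> int n < tnum m + 2 * tnum (m - 3))
       \<and> (\<forall>m::int. m \<ge> 2 \<and> tnum (m - 1) + 2 * tnum (m - 4) \<le> int n
                    \<and> int n < tnum m + 2 * tnum (m - 3) \<longrightarrow>
              m \<ge> 7 \<and> (cube_count n = 1 \<longleftrightarrow> int n \<le> tnum (m - 1) + knum (nat (m + 1)) - 2)))"
proof (intro conjI allI impI)
  fix n :: nat
  assume "1 \<le> n \<and> n \<le> 57"
  then show "cube_count n = 0" by (simp add: cube_count_below_58)
next
  fix n :: nat
  assume "58 \<le> n"
  then obtain j where "3 \<le> j" "cube_start j \<le> n" "n < cube_start (Suc j)"
    by (rule cube_window_exists)
  then show "\<exists>m::int. m \<ge> 2 \<and> tnum (m - 1) + 2 * tnum (m - 4) \<le> int n \<and> int n < tnum m + 2 * tnum (m - 3)"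
    using tnum_window_iff[of "int j + 4" j n] by (intro exI[of _ "int j + 4"]) simp
next
  fix n :: nat and m :: int
  assume n: "58 \<le> n"
    and m: "m \<ge> 2 \<and> tnum (m - 1) + 2 * tnum (m - 4) \<le> int n \<and> int n < tnum m + 2 * tnum (m - 3)"
  show m7: "m \<ge> 7"
    using m n tnum_window_end_le_58[of m] by (cases "m \<le> 6") auto
  define j where "j = nat (m - 4)"
  have mj: "m = int j + 4" using m7 by (simp add: j_def)
  have "3 \<le> j" "cube_start j \<le> n" "n < cube_start (Suc j)"
    using m7 m tnum_window_iff[OF mj] by (simp_all add: j_def)
  then show "cube_count n = 1 \<longleftrightarrow> int n \<le> tnum (m - 1) + knum (nat (m + 1)) - 2"
    using cube_count_window tnum_cube_end[OF mj] by simp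
qed

end
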